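(* Let $T$ be an infinite periodic tree. Then either $\mathrm{br}(T)>1$, or there exists an integer $d\ge1$ such that $|B(n)|/n^d$ is bounded away from $0$ and $\infty$ (for $n\ge1$).
   Context: $T$ is an infinite locally finite tree rooted at $o$; $|x|$ is the distance from $o$ to $x$, $T^x$ the subtree of descendants of $x$ rooted at $x$, $B(n)=\{x:|x|\le n\}$. For an edge $e=(e^-,e^+)$ with $|e^+|=|e^-|+1$ set $|e|=|e^+|$. A cutset is a set of edges meeting every infinite path from $o$; $\Pi(T)$ is the set of cutsets. The branching number is $\mathrm{br}(T)=\sup\{\lambda>0:\inf_{\pi\in\Pi(T)}\sum_{e\in\pi}\lambda^{-|e|}>0\}$. For an integer $N\ge0$, $T$ is $N$-periodic if for every vertex $x$ there is an adjacency-preserving bijection $f:T^x\to T^{f(x)}$ with $|f(x)|\le N$; $T$ is periodic if it is $N$-periodic for some $N$. *)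

theory Defs
  imports Complex_Main "HOL-Library.Extended_Real" "HOL-Library.Extended_Nonnegative_Real"
begin

text \<open>Rooted trees in Ulam--Harris form: a vertex is a finite list of natural numbers,
  the root o is the empty list, the parent of x @ [i] is x.  Every countable rooted
  tree (in particular every locally finite one) is isomorphic to such a tree.\<close>

type_synonym vert = "nat list"

definition rooted_tree :: "vert set \<Rightarrow> bool" where
  "rooted_tree T \<longleftrightarrow> [] \<in> T \<and> (\<forall>x i. x @ [i] \<in> T \<longrightarrow> x \<in> T)"

definition locally_finite :: "vert set \<Rightarrow> bool" where
  "locally_finite T \<longleftrightarrow> (\<forall>x\<in>T. finite {i. x @ [i] \<in> T})"

definition adj :: "vert set \<Rightarrow> vert \<Rightarrow> vert \<Rightarrow> bool" where
  "adj T u v \<longleftrightarrow> u \<in> T \<and> v \<in> T \<and> ((\<exists>i. v = u @ [i]) \<or> (\<exists>i. u = v @ [i]))"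

definition subtree :: "vert set \<Rightarrow> vert \<Rightarrow> vert set" where
  "subtree T x = {y \<in> T. \<exists>z. y = x @ z}"

definition ball :: "vert set \<Rightarrow> nat \<Rightarrow> vert set" where
  "ball T n = {x \<in> T. length x \<le> n}"

definition periodicN :: "vert set \<Rightarrow> nat \<Rightarrow> bool" where
  "periodicN T N \<longleftrightarrow> (\<forall>x\<in>T. \<exists>f. f x \<in> T \<and> length (f x) \<le> N \<and>
      bij_betw f (subtree T x) (subtree T (f x)) \<and>
      (\<forall>u\<in>subtree T x. \<forall>v\<in>subtree T x. adj T u v \<longrightarrow> adj T (f u) (f v)))"

definition periodic :: "vert set \<Rightarrow> bool" where
  "periodic T \<longleftrightarrow> (\<exists>N. periodicN T N)"

text \<open>Edges e = (e-, e+) directed away from the root; |e| = |e+|.\<close>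
definition edges :: "vert set \<Rightarrow> (vert \<times> vert) set" where
  "edges T = {(u, u @ [i]) | u i. u @ [i] \<in> T}"

definition ray :: "vert set \<Rightarrow> (nat \<Rightarrow> vert) \<Rightarrow> bool" where
  "ray T p \<longleftrightarrow> p 0 = [] \<and> (\<forall>n. p (Suc n) \<in> T \<and> (\<exists>i. p (Suc n) = p n @ [i]))"

definition cutsets :: "vert set \<Rightarrow> (vert \<times> vert) set set" where
  "cutsets T = {\<pi>. \<pi> \<subseteq> edges T \<and> (\<forall>p. ray T p \<longrightarrow> (\<exists>n. (p n, p (Suc n)) \<in> \<pi>))}"

definition cutsum :: "real \<Rightarrow> (vert \<times> vert) set \<Rightarrow> ennreal" where
  "cutsum lam \<pi> = (SUP F\<in>{F. finite F \<and> F \<subseteq> \<pi>}. \<Sum>e\<in>F. ennreal (lam powr (- real (length (snd e)))))"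

definition branching_number :: "vert set \<Rightarrow> ereal" where
  "branching_number T = Sup {ereal lam | lam. lam > 0 \<and> (INF \<pi>\<in>cutsets T. cutsum lam \<pi>) > 0}"

end

theory Submission
  imports Defs "HOL-Library.Sublist"
begin

text \<open>Say that x has disjoint copies if T^x contains two incomparable vertices y1, y2 with
  T^y1 and T^y2 isomorphic to T^x, at depth at most L below x.  Then with lam = 2 powr (1/L) every
  cutset has lam-weight at least lam^(-|x|)/2: a lighter cutset is also light below one of the two
  copies (as lam^L = 2), hence below a copy nested in that one, and so on; these nested light
  copies trace out a ray that the cutset misses.  Hence br T \<ge> lam > 1.

  If no vertex has disjoint copies, let F_x(n) count the vertices of T^x within distance n of x.
  Periodicity leaves only finitely many isomorphism types of subtrees, and we induct on the
  number of types occurring in T^x.  If T^x contains no proper copy of itself, every child carries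
  fewer types and F_x grows like the fastest child.  Otherwise a proper copy at depth L gives
  F_x(n) = g(n) + F_x(n - L), where g counts the vertices off the copy; these lie on the path to
  the copy or in side subtrees, which carry fewer types since there are no disjoint copies.  So g
  grows polynomially, and F_x with one more degree.\<close>

section \<open>Rooted trees\<close>

lemma rooted_tree_prefix_closed:
  assumes "rooted_tree T" "y \<in> T" "prefix x y"
  shows "x \<in> T"
proof -
  obtain z where "y = x @ z" using assms(3) prefix_def by auto
  with assms(2) show ?thesis
  proof (induction z arbitrary: y rule: rev_induct)
    case (snoc a z)
    then show ?case using assms(1) unfolding rooted_tree_def by (metis append_assoc)
  qed simp
qed

lemma prefix_eq_if_same_length:
  "prefix a c \<Longrightarrow> prefix b c \<Longrightarrow> length a = length b \<Longrightarrow> a = b"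
  by (metis prefix_length_prefix prefix_order.antisym order_refl)

lemma subtree_eq: "subtree T x = {y \<in> T. prefix x y}"
  by (auto simp: subtree_def prefix_def)

lemma subtree_subset: "y \<in> subtree T x \<Longrightarrow> subtree T y \<subseteq> subtree T x"
  by (auto simp: subtree_eq intro: prefix_order.trans)

lemma self_in_subtree: "x \<in> T \<Longrightarrow> x \<in> subtree T x"
  by (simp add: subtree_eq)

definition children :: "vert set \<Rightarrow> vert \<Rightarrow> vert set" where
  "children T x = {x @ [i] | i. x @ [i] \<in> T}"

lemma finite_children: "locally_finite T \<Longrightarrow> x \<in> T \<Longrightarrow> finite (children T x)"
  unfolding locally_finite_def children_def by (simp add: setcompr_eq_image)

lemma finite_ball:
  assumes "rooted_tree T" "locally_finite T"
  shows "finite (ball T n)"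
proof (induction n)
  case 0
  have "ball T 0 \<subseteq> {[]}" by (auto simp: ball_def)
  then show ?case using finite_subset by blast
next
  case (Suc n)
  have "ball T (Suc n) \<subseteq> ball T n \<union> (\<Union>x\<in>ball T n. children T x)"
  proof
    fix y assume y: "y \<in> ball T (Suc n)"
    show "y \<in> ball T n \<union> (\<Union>x\<in>ball T n. children T x)"
    proof (cases "length y \<le> n")
      case False
      then obtain x i where yx: "y = x @ [i]" by (metis le0 list.size(3) rev_exhaust)
      then have "x \<in> T" using y assms(1) by (auto simp: ball_def rooted_tree_def)
      then show ?thesis using y yx False by (auto simp: ball_def children_def)
    qed (use y in \<open>auto simp: ball_def\<close>)
  qed
  moreover have "finite (\<Union>x\<in>ball T n. children T x)"
    using Suc finite_children[OF assms(2)] by (auto simp: ball_def)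
  ultimately show ?case using Suc by (meson finite_UnI finite_subset)
qed

lemma tree_subset_ball_if_level_empty:
  assumes "rooted_tree T" "\<not> (\<exists>v\<in>T. length v = k)"
  shows "T \<subseteq> ball T k"
proof
  fix v assume v: "v \<in> T"
  have "length v < k"
  proof (rule ccontr)
    assume "\<not> length v < k"
    then have "length (take k v) = k" by simp
    moreover have "take k v \<in> T" using rooted_tree_prefix_closed[OF assms(1) v take_is_prefix] .
    ultimately show False using assms(2) by blast
  qed
  then show "v \<in> ball T k" using v by (simp add: ball_def)
qed

lemma card_ball_ge:
  assumes "rooted_tree T" "locally_finite T" "infinite T"
  shows "real n + 1 \<le> real (card (ball T n))"
proof -
  have "{0..n} \<subseteq> length ` ball T n"
  proof
    fix k assume k: "k \<in> {0..n}"
    have "\<exists>v\<in>T. length v = k"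
      using tree_subset_ball_if_level_empty[OF assms(1)] finite_ball[OF assms(1,2)] assms(3)
      by (meson finite_subset)
    then show "k \<in> length ` ball T n" using k by (force simp: ball_def)
  qed
  then have "card {0..n} \<le> card (length ` ball T n)"
    using finite_ball[OF assms(1,2)] by (intro card_mono) auto
  also have "\<dots> \<le> card (ball T n)" using finite_ball[OF assms(1,2)] by (rule card_image_le)
  finally have "real (n + 1) \<le> real (card (ball T n))" by (simp only: of_nat_le_iff) simp
  then show ?thesis by (simp add: add.commute)
qed

definition subtree_ball :: "vert set \<Rightarrow> vert \<Rightarrow> nat \<Rightarrow> vert set" where
  "subtree_ball T x n = {v \<in> subtree T x. length v \<le> length x + n}"

lemma subtree_ball_root: "subtree_ball T [] n = ball T n"
  by (auto simp: subtree_ball_def ball_def subtree_def)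

lemma finite_subtree_ball:
  assumes "rooted_tree T" "locally_finite T"
  shows "finite (subtree_ball T x n)"
proof -
  have "subtree_ball T x n \<subseteq> ball T (length x + n)"
    by (auto simp: subtree_ball_def ball_def subtree_def)
  then show ?thesis using finite_ball[OF assms] finite_subset by blast
qed

lemma card_subtree_ball_pos:
  assumes "rooted_tree T" "locally_finite T" "x \<in> T"
  shows "1 \<le> card (subtree_ball T x n)"
proof -
  have "x \<in> subtree_ball T x n" using assms(3) by (simp add: subtree_ball_def self_in_subtree)
  then show ?thesis using finite_subtree_ball[OF assms(1,2)]
    by (metis One_nat_def Suc_leI card_gt_0_iff empty_iff)
qed

section \<open>Subtree isomorphisms\<close>

definition subtree_iso :: "vert set \<Rightarrow> vert \<Rightarrow> vert \<Rightarrow> (vert \<Rightarrow> vert) \<Rightarrow> bool" where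
  "subtree_iso T x y \<phi> \<longleftrightarrow> bij_betw \<phi> (subtree T x) (subtree T y) \<and> \<phi> x = y \<and>
    (\<forall>u\<in>subtree T x. \<forall>i. u @ [i] \<in> T \<longrightarrow> (\<exists>j. \<phi> (u @ [i]) = \<phi> u @ [j]))"

definition isomorphic :: "vert set \<Rightarrow> vert \<Rightarrow> vert \<Rightarrow> bool" where
  "isomorphic T x y \<longleftrightarrow> x \<in> T \<and> (\<exists>\<phi>. subtree_iso T x y \<phi>)"

lemma subtree_iso_length:
  assumes R: "rooted_tree T" and I: "subtree_iso T x y \<phi>" and u: "u \<in> subtree T x"
  shows "\<phi> u \<in> subtree T y \<and> length (\<phi> u) + length x = length u + length y"
proof -
  obtain z where uz: "u = x @ z" and uT: "u \<in> T" using u by (auto simp: subtree_def)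
  have bij: "bij_betw \<phi> (subtree T x) (subtree T y)" using I by (simp add: subtree_iso_def)
  from uT uz show ?thesis
  proof (induction z arbitrary: u rule: rev_induct)
    case Nil
    then show ?case using I bij_betw_apply[OF bij] by (auto simp: subtree_iso_def self_in_subtree)
  next
    case (snoc a z)
    have xz: "x @ z \<in> T" using snoc.prems R unfolding rooted_tree_def by (metis append_assoc)
    have "(x @ z) @ [a] \<in> T" "x @ z \<in> subtree T x" using snoc.prems xz by (auto simp: subtree_def)
    then obtain j where "\<phi> ((x @ z) @ [a]) = \<phi> (x @ z) @ [j]"
      using I unfolding subtree_iso_def by blast
    moreover have "\<phi> u \<in> subtree T y" using bij snoc.prems by (auto simp: bij_betw_def subtree_def)
    ultimately show ?case using snoc.IH[OF xz] snoc.prems by simp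
  qed
qed

lemma subtree_iso_prefix:
  assumes R: "rooted_tree T" and I: "subtree_iso T x y \<phi>" and u: "u \<in> subtree T x"
    and w: "w \<in> T" and uw: "prefix u w"
  shows "prefix (\<phi> u) (\<phi> w)"
proof -
  obtain z where "w = u @ z" using uw prefix_def by auto
  with w show ?thesis
  proof (induction z arbitrary: w rule: rev_induct)
    case (snoc a z)
    have uz: "u @ z \<in> T" using snoc.prems R unfolding rooted_tree_def by (metis append_assoc)
    have "u @ z \<in> subtree T x" using uz u by (auto simp: subtree_def)
    moreover have "(u @ z) @ [a] \<in> T" using snoc.prems by simp
    ultimately obtain j where "\<phi> ((u @ z) @ [a]) = \<phi> (u @ z) @ [j]"
      using I unfolding subtree_iso_def by blast
    then show ?case using snoc.IH[OF uz] snoc.prems by (metis append_assoc prefix_append)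
  qed simp
qed

lemma subtree_iso_prefix_iff:
  assumes R: "rooted_tree T" and I: "subtree_iso T x y \<phi>"
    and u: "u \<in> subtree T x" and w: "w \<in> subtree T x"
  shows "prefix (\<phi> u) (\<phi> w) \<longleftrightarrow> prefix u w"
proof
  assume p: "prefix (\<phi> u) (\<phi> w)"
  have "length (\<phi> u) \<le> length (\<phi> w)" using p by (rule prefix_length_le)
  then have le: "length u \<le> length w"
    using subtree_iso_length[OF R I u] subtree_iso_length[OF R I w] by simp
  define a where "a = take (length u) w"
  have wT: "w \<in> T" and xw: "prefix x w" using w by (auto simp: subtree_eq)
  have aw: "prefix a w" unfolding a_def by (rule take_is_prefix)
  have la: "length a = length u" using le by (simp add: a_def)
  have "length x \<le> length u" using u by (auto simp: subtree_def)
  then have "prefix x a" using prefix_length_prefix[OF xw aw] la by simp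
  then have a: "a \<in> subtree T x"
    using rooted_tree_prefix_closed[OF R wT aw] by (simp add: subtree_eq)
  have "length (\<phi> a) = length (\<phi> u)"
    using subtree_iso_length[OF R I a] subtree_iso_length[OF R I u] la by simp
  with subtree_iso_prefix[OF R I a wT aw] p have "\<phi> a = \<phi> u" by (rule prefix_eq_if_same_length)
  then have "a = u" using I a u unfolding subtree_iso_def bij_betw_def inj_on_def by blast
  then show "prefix u w" using aw by simp
next
  assume "prefix u w"
  then show "prefix (\<phi> u) (\<phi> w)" using subtree_iso_prefix[OF R I u] w by (simp add: subtree_def)
qed

lemma subtree_iso_inv:
  assumes R: "rooted_tree T" and I: "subtree_iso T x y \<phi>" and xT: "x \<in> T"
  shows "subtree_iso T y x (inv_into (subtree T x) \<phi>)"
proof -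
  let ?\<psi> = "inv_into (subtree T x) \<phi>"
  have bij: "bij_betw \<phi> (subtree T x) (subtree T y)" using I by (simp add: subtree_iso_def)
  have bij': "bij_betw ?\<psi> (subtree T y) (subtree T x)" using bij_betw_inv_into[OF bij] .
  have "?\<psi> y = x" using I self_in_subtree[OF xT] bij by (auto simp: subtree_iso_def bij_betw_def)
  moreover have "\<exists>i. ?\<psi> (w @ [j]) = ?\<psi> w @ [i]"
    if w: "w \<in> subtree T y" and wj: "w @ [j] \<in> T" for w j
  proof -
    have wjs: "w @ [j] \<in> subtree T y" using w wj by (auto simp: subtree_def)
    define u where "u = ?\<psi> w"
    define v where "v = ?\<psi> (w @ [j])"
    have us: "u \<in> subtree T x" and vs: "v \<in> subtree T x"
      using bij_betw_apply[OF bij' w] bij_betw_apply[OF bij' wjs] by (simp_all add: u_def v_def)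
    have fu: "\<phi> u = w" and fv: "\<phi> v = w @ [j]"
      using w wjs bij by (simp_all add: u_def v_def bij_betw_inv_into_right)
    then have "prefix u v" using subtree_iso_prefix_iff[OF R I us vs] by simp
    then obtain z where vz: "v = u @ z" unfolding prefix_def by blast
    have "length v = Suc (length u)"
      using subtree_iso_length[OF R I us] subtree_iso_length[OF R I vs] fu fv by simp
    then obtain i where "z = [i]" using vz by (cases z) auto
    then show ?thesis using vz u_def v_def by auto
  qed
  ultimately show ?thesis using bij' by (simp add: subtree_iso_def)
qed

lemma subtree_iso_comp:
  assumes I: "subtree_iso T x y \<phi>" and J: "subtree_iso T y z \<psi>"
  shows "subtree_iso T x z (\<psi> \<circ> \<phi>)"
proof -
  have bij: "bij_betw \<phi> (subtree T x) (subtree T y)" and bij': "bij_betw \<psi> (subtree T y) (subtree T z)"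
    using I J by (simp_all add: subtree_iso_def)
  have "\<exists>k. \<psi> (\<phi> (u @ [i])) = \<psi> (\<phi> u) @ [k]" if u: "u \<in> subtree T x" and ui: "u @ [i] \<in> T" for u i
  proof -
    obtain j where j: "\<phi> (u @ [i]) = \<phi> u @ [j]" using I u ui by (auto simp: subtree_iso_def)
    have "u @ [i] \<in> subtree T x" using u ui by (auto simp: subtree_def)
    from bij_betw_apply[OF bij this] have "\<phi> u @ [j] \<in> T" using j by (simp add: subtree_def)
    with bij_betw_apply[OF bij u] obtain k where "\<psi> (\<phi> u @ [j]) = \<psi> (\<phi> u) @ [k]"
      using J by (auto simp: subtree_iso_def)
    then show ?thesis using j by auto
  qed
  then show ?thesis using I J bij_betw_trans[OF bij bij'] by (simp add: subtree_iso_def)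
qed

lemma subtree_iso_restrict:
  assumes R: "rooted_tree T" and I: "subtree_iso T x y \<phi>" and u: "u \<in> subtree T x"
  shows "subtree_iso T u (\<phi> u) \<phi>"
proof -
  have bij: "bij_betw \<phi> (subtree T x) (subtree T y)" using I by (simp add: subtree_iso_def)
  have sub: "subtree T u \<subseteq> subtree T x" using subtree_subset[OF u] .
  have "\<phi> ` subtree T u = subtree T (\<phi> u)"
  proof
    show "\<phi> ` subtree T u \<subseteq> subtree T (\<phi> u)"
    proof
      fix w assume "w \<in> \<phi> ` subtree T u"
      then obtain v where v: "v \<in> subtree T u" and wv: "w = \<phi> v" by auto
      have vx: "v \<in> subtree T x" using v sub by blast
      then have "\<phi> v \<in> T" using bij_betw_apply[OF bij] by (auto simp: subtree_def)
      moreover have "prefix (\<phi> u) (\<phi> v)"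
        using subtree_iso_prefix_iff[OF R I u vx] v by (simp add: subtree_eq)
      ultimately show "w \<in> subtree T (\<phi> u)" using wv by (simp add: subtree_eq)
    qed
  next
    show "subtree T (\<phi> u) \<subseteq> \<phi> ` subtree T u"
    proof
      fix w assume w: "w \<in> subtree T (\<phi> u)"
      have "w \<in> subtree T y" using w subtree_subset[OF bij_betw_apply[OF bij u]] by blast
      then obtain v where v: "v \<in> subtree T x" and wv: "w = \<phi> v" using bij by (auto simp: bij_betw_def)
      then have "prefix u v" using w subtree_iso_prefix_iff[OF R I u v] by (simp add: subtree_eq)
      then show "w \<in> \<phi> ` subtree T u" using v wv by (auto simp: subtree_eq)
    qed
  qed
  moreover have "inj_on \<phi> (subtree T u)" using bij sub by (auto simp: bij_betw_def intro: inj_on_subset)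
  ultimately have "bij_betw \<phi> (subtree T u) (subtree T (\<phi> u))" by (simp add: bij_betw_def)
  then show ?thesis using I sub unfolding subtree_iso_def by blast
qed

lemma subtree_iso_card_subtree_ball:
  assumes R: "rooted_tree T" and I: "subtree_iso T x y \<phi>"
  shows "card (subtree_ball T x n) = card (subtree_ball T y n)"
proof -
  have bij: "bij_betw \<phi> (subtree T x) (subtree T y)" using I by (simp add: subtree_iso_def)
  have "bij_betw \<phi> (subtree_ball T x n) (subtree_ball T y n)"
  proof (rule bij_betw_subset[OF bij])
    show "subtree_ball T x n \<subseteq> subtree T x" by (auto simp: subtree_ball_def)
    show "\<phi> ` subtree_ball T x n = subtree_ball T y n"
    proof
      show "\<phi> ` subtree_ball T x n \<subseteq> subtree_ball T y n"
        using subtree_iso_length[OF R I] by (force simp: subtree_ball_def)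
    next
      show "subtree_ball T y n \<subseteq> \<phi> ` subtree_ball T x n"
      proof
        fix w assume w: "w \<in> subtree_ball T y n"
        then obtain v where v: "v \<in> subtree T x" and wv: "w = \<phi> v"
          using bij by (auto simp: bij_betw_def subtree_ball_def)
        then show "w \<in> \<phi> ` subtree_ball T x n"
          using subtree_iso_length[OF R I v] w by (auto simp: subtree_ball_def)
      qed
    qed
  qed
  then show ?thesis by (rule bij_betw_same_card)
qed

lemma isomorphic_refl: "x \<in> T \<Longrightarrow> isomorphic T x x"
  unfolding isomorphic_def subtree_iso_def by (rule conjI, simp, rule exI[of _ id], auto)

lemma isomorphic_in_tree:
  assumes "isomorphic T x y"
  shows "y \<in> T"
proof -
  obtain \<phi> where bij: "bij_betw \<phi> (subtree T x) (subtree T y)" and "\<phi> x = y" and "x \<in> T"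
    using assms by (auto simp: isomorphic_def subtree_iso_def)
  then have "y \<in> subtree T y" using bij_betw_apply[OF bij self_in_subtree] by metis
  then show ?thesis by (simp add: subtree_def)
qed

lemma isomorphic_sym: "rooted_tree T \<Longrightarrow> isomorphic T x y \<Longrightarrow> isomorphic T y x"
  using subtree_iso_inv isomorphic_in_tree unfolding isomorphic_def by blast

lemma isomorphic_trans: "isomorphic T x y \<Longrightarrow> isomorphic T y z \<Longrightarrow> isomorphic T x z"
  using subtree_iso_comp unfolding isomorphic_def by blast

lemma isomorphic_card_subtree_ball:
  "rooted_tree T \<Longrightarrow> isomorphic T x y \<Longrightarrow> card (subtree_ball T x n) = card (subtree_ball T y n)"
  using subtree_iso_card_subtree_ball unfolding isomorphic_def by blast

lemma adjacency_preserving_child_or_parent: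
  assumes u: "u \<in> subtree T x" "u @ [i] \<in> T"
    and adjp: "\<forall>u\<in>subtree T x. \<forall>v\<in>subtree T x. adj T u v \<longrightarrow> adj T (f u) (f v)"
  shows "(\<exists>j. f (u @ [i]) = f u @ [j]) \<or> (\<exists>j. f u = f (u @ [i]) @ [j])"
proof -
  have "u @ [i] \<in> subtree T x" using u by (auto simp: subtree_def)
  moreover have "adj T u (u @ [i])" using u by (auto simp: adj_def subtree_def)
  ultimately have "adj T (f u) (f (u @ [i]))" using adjp u by blast
  then show ?thesis by (auto simp: adj_def)
qed

lemma adjacency_preserving_subtree_iso:
  assumes R: "rooted_tree T" and xT: "x \<in> T"
    and bij: "bij_betw f (subtree T x) (subtree T (f x))"
    and adjp: "\<forall>u\<in>subtree T x. \<forall>v\<in>subtree T x. adj T u v \<longrightarrow> adj T (f u) (f v)"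
  shows "subtree_iso T x (f x) f"
proof -
  have inj: "inj_on f (subtree T x)" using bij by (simp add: bij_betw_def)
  note child_or_parent = adjacency_preserving_child_or_parent[OF _ _ adjp]
  text \<open>A child cannot be sent to the parent of the image: at the root of T^x this would
    leave the subtree, further down it would contradict injectivity.\<close>
  have "\<forall>i. x @ z @ [i] \<in> T \<longrightarrow> (\<exists>j. f (x @ z @ [i]) = f (x @ z) @ [j])" for z
  proof (induction z rule: rev_induct)
    case Nil
    show ?case
    proof (intro allI impI)
      fix i assume xi: "x @ [] @ [i] \<in> T"
      have "x @ [i] \<in> subtree T x" using xi by (simp add: subtree_def)
      from bij_betw_apply[OF bij this] have "length (f x) \<le> length (f (x @ [i]))"
        by (auto simp: subtree_def)
      moreover have "(\<exists>j. f (x @ [i]) = f x @ [j]) \<or> (\<exists>j. f x = f (x @ [i]) @ [j])"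
        using child_or_parent[OF self_in_subtree[OF xT]] xi by simp
      ultimately show "\<exists>j. f (x @ [] @ [i]) = f (x @ []) @ [j]" by auto
    qed
  next
    case (snoc k z)
    show ?case
    proof (intro allI impI)
      fix i assume h: "x @ (z @ [k]) @ [i] \<in> T"
      have a1: "x @ z @ [k] \<in> T" using h R unfolding rooted_tree_def by (metis append_assoc)
      have a0: "x @ z \<in> T" using a1 R unfolding rooted_tree_def by (metis append_assoc)
      obtain j' where j': "f (x @ z @ [k]) = f (x @ z) @ [j']" using snoc a1 by blast
      have s0: "x @ z \<in> subtree T x" and s1: "x @ z @ [k] \<in> subtree T x"
        and s2: "x @ (z @ [k]) @ [i] \<in> subtree T x"
        using a0 a1 h by (auto simp: subtree_def)
      have "f (x @ (z @ [k]) @ [i]) \<noteq> f (x @ z)"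
        using inj_on_eq_iff[OF inj s2 s0] by simp
      moreover have "(\<exists>j. f ((x @ z @ [k]) @ [i]) = f (x @ z @ [k]) @ [j]) \<or>
          (\<exists>j. f (x @ z @ [k]) = f ((x @ z @ [k]) @ [i]) @ [j])"
        using child_or_parent[OF s1] h by simp
      ultimately show "\<exists>j. f (x @ (z @ [k]) @ [i]) = f (x @ z @ [k]) @ [j]"
        using j' by auto
    qed
  qed
  then have "\<exists>j. f (u @ [i]) = f u @ [j]" if "u \<in> subtree T x" "u @ [i] \<in> T" for u i
    using that by (auto simp: subtree_def)
  then show ?thesis using bij by (simp add: subtree_iso_def)
qed

lemma periodicN_isomorphic_ball:
  assumes R: "rooted_tree T" and P: "periodicN T N" and xT: "x \<in> T"
  shows "\<exists>r\<in>ball T N. isomorphic T x r"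
proof -
  obtain f where f: "f x \<in> T" "length (f x) \<le> N" and bij: "bij_betw f (subtree T x) (subtree T (f x))"
    and adjp: "\<forall>u\<in>subtree T x. \<forall>v\<in>subtree T x. adj T u v \<longrightarrow> adj T (f u) (f v)"
    using P xT unfolding periodicN_def by blast
  have "isomorphic T x (f x)"
    using adjacency_preserving_subtree_iso[OF R xT bij adjp] xT unfolding isomorphic_def by blast
  then show ?thesis using f by (auto simp: ball_def)
qed

section \<open>Polynomial growth\<close>

definition poly_growth :: "(nat \<Rightarrow> real) \<Rightarrow> nat \<Rightarrow> bool" where
  "poly_growth f d \<longleftrightarrow> (\<exists>c>0. \<forall>n. c * (real n + 1) ^ d \<le> f n) \<and> (\<exists>C. \<forall>n. f n \<le> C * (real n + 1) ^ d)"

lemma poly_lower_bound_shift: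
  fixes G :: "nat \<Rightarrow> real"
  assumes G1: "\<forall>n. 1 \<le> G n" and c: "c > 0" and Gh: "\<forall>n\<ge>h. c * (real (n - h) + 1) ^ d \<le> G n"
  shows "\<exists>c'>0. \<forall>n. c' * (real n + 1) ^ d \<le> G n"
proof -
  define c' where "c' = min 1 c / (real h + 1) ^ d"
  have hp: "(real h + 1) ^ d > 0" by simp
  have c'p: "c' > 0" using c hp by (simp add: c'_def)
  have "c' * (real n + 1) ^ d \<le> G n" for n
  proof (cases "n < h")
    case True
    have "c' * (real n + 1) ^ d \<le> c' * (real h + 1) ^ d"
      using True c'p by (intro mult_left_mono power_mono) auto
    also have "\<dots> = min 1 c" using hp by (simp add: c'_def)
    finally show ?thesis using G1 by (meson min.bounded_iff order_trans)
  next
    case False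
    have "real h * real h \<le> real h * real n" using False by (intro mult_left_mono) auto
    then have "real n + 1 \<le> (real h + 1) * (real (n - h) + 1)"
      using False by (simp add: of_nat_diff algebra_simps)
    then have "(real n + 1) ^ d \<le> (real h + 1) ^ d * (real (n - h) + 1) ^ d"
      by (metis power_mono power_mult_distrib le_add_same_cancel2 of_nat_0_le_iff order_trans zero_le_one)
    then have "c' * (real n + 1) ^ d \<le> c' * ((real h + 1) ^ d * (real (n - h) + 1) ^ d)"
      using c'p by (intro mult_left_mono) auto
    also have "\<dots> = min 1 c * (real (n - h) + 1) ^ d" using hp by (simp add: c'_def)
    also have "\<dots> \<le> c * (real (n - h) + 1) ^ d" by (intro mult_right_mono) auto
    also have "\<dots> \<le> G n" using Gh False by simp
    finally show ?thesis .
  qed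
  then show ?thesis using c'p by blast
qed

lemma poly_upper_bound_mono:
  fixes f :: "nat \<Rightarrow> real"
  assumes "\<forall>n. f n \<le> C * (real n + 1) ^ d" and "d \<le> D"
  shows "\<forall>n. f n \<le> \<bar>C\<bar> * (real n + 1) ^ D"
proof
  fix n
  have "f n \<le> \<bar>C\<bar> * (real n + 1) ^ d"
    using assms(1) by (meson abs_ge_self mult_right_mono order_trans zero_le_power add_nonneg_nonneg of_nat_0_le_iff zero_le_one)
  also have "\<dots> \<le> \<bar>C\<bar> * (real n + 1) ^ D" using assms(2) by (intro mult_left_mono power_increasing) auto
  finally show "f n \<le> \<bar>C\<bar> * (real n + 1) ^ D" .
qed

lemma poly_growth_squeeze:
  fixes G :: "nat \<Rightarrow> real" and F :: "'a \<Rightarrow> nat \<Rightarrow> real"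
  assumes S: "finite S"
    and F: "\<forall>s\<in>S. \<exists>d. poly_growth (F s) d"
    and G1: "\<forall>n. 1 \<le> G n"
    and upper: "\<forall>n. G n \<le> A + (\<Sum>s\<in>S. F s n)"
    and lower: "\<forall>s\<in>S. \<forall>n\<ge>h s. F s (n - h s) \<le> G n"
  shows "\<exists>d. poly_growth G d"
proof -
  obtain ds where ds: "\<forall>s\<in>S. poly_growth (F s) (ds s)" using bchoice[OF F] by blast
  define D where "D = Max (insert 0 (ds ` S))"
  have "\<forall>s\<in>S. \<exists>C. \<forall>n. F s n \<le> C * (real n + 1) ^ D"
  proof
    fix s assume s: "s \<in> S"
    then obtain C where "\<forall>n. F s n \<le> C * (real n + 1) ^ ds s" using ds by (auto simp: poly_growth_def)
    moreover have "ds s \<le> D" using S s by (simp add: D_def)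
    ultimately have "\<forall>n. F s n \<le> \<bar>C\<bar> * (real n + 1) ^ D" by (rule poly_upper_bound_mono)
    then show "\<exists>C. \<forall>n. F s n \<le> C * (real n + 1) ^ D" ..
  qed
  then obtain Cs where Cs: "\<forall>s\<in>S. \<forall>n. F s n \<le> Cs s * (real n + 1) ^ D" by (rule bchoice[elim_format]) blast
  have "G n \<le> (\<bar>A\<bar> + (\<Sum>s\<in>S. Cs s)) * (real n + 1) ^ D" for n
  proof -
    have "G n \<le> A + (\<Sum>s\<in>S. F s n)" using upper by blast
    also have "\<dots> \<le> \<bar>A\<bar> * (real n + 1) ^ D + (\<Sum>s\<in>S. Cs s * (real n + 1) ^ D)"
      using poly_upper_bound_mono[of "\<lambda>_. A" A 0 D] Cs by (intro add_mono sum_mono) auto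
    also have "\<dots> = (\<bar>A\<bar> + (\<Sum>s\<in>S. Cs s)) * (real n + 1) ^ D"
      by (simp add: sum_distrib_right distrib_right)
    finally show ?thesis .
  qed
  moreover have "\<exists>c>0. \<forall>n. c * (real n + 1) ^ D \<le> G n"
  proof (cases "D = 0")
    case True then show ?thesis using G1 by (intro exI[of _ 1]) auto
  next
    case False
    then have "D \<in> ds ` S" unfolding D_def using S
      by (metis Max_in finite_imageI finite_insert insert_iff insert_not_empty)
    then obtain s where s: "s \<in> S" and Ds: "D = ds s" by auto
    then obtain c where "c > 0" and "\<forall>n. c * (real n + 1) ^ D \<le> F s n" using ds by (auto simp: poly_growth_def)
    then show ?thesis using poly_lower_bound_shift[OF G1, of c "h s" D] lower s by (meson order_trans)
  qed
  ultimately show ?thesis unfolding poly_growth_def by blast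
qed

lemma recurrence_upper:
  fixes F g :: "nat \<Rightarrow> real"
  assumes L: "L \<ge> 1" and rec: "\<forall>n. F n = g n + (if L \<le> n then F (n - L) else 0)"
    and C: "C \<ge> 0" and g: "\<forall>n. g n \<le> C * (real n + 1) ^ d"
  shows "F n \<le> C * (real n + 1) ^ Suc d"
proof -
  have bound: "F n \<le> C * (real n + 1) ^ d * (real (n div L) + 1)" for n
  proof (induction n rule: less_induct)
    case (less n)
    show ?case
    proof (cases "L \<le> n")
      case False
      then show ?thesis using rec g by simp
    next
      case True
      have IH: "F (n - L) \<le> C * (real (n - L) + 1) ^ d * (real ((n - L) div L) + 1)"
        using less.IH[of "n - L"] L True by simp
      have "n div L = (n - L + L) div L" using True by simp
      then have dv: "real ((n - L) div L) + 1 = real (n div L)" using L by simp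
      have "F n = g n + F (n - L)" using rec True by simp
      also have "\<dots> \<le> C * (real n + 1) ^ d + C * (real n + 1) ^ d * (real ((n - L) div L) + 1)"
        using g IH C by (intro add_mono order_trans[OF IH] mult_right_mono mult_left_mono power_mono) auto
      also have "\<dots> = C * (real n + 1) ^ d * (real (n div L) + 1)"
        by (simp add: algebra_simps flip: dv)
      finally show ?thesis .
    qed
  qed
  also have "C * (real n + 1) ^ d * (real (n div L) + 1) \<le> C * (real n + 1) ^ d * (real n + 1)"
    using C by (intro mult_left_mono) auto
  finally show ?thesis by (simp add: ac_simps)
qed

lemma recurrence_ge_sum:
  fixes F g :: "nat \<Rightarrow> real"
  assumes L: "L \<ge> 1" and rec: "\<forall>n. F n = g n + (if L \<le> n then F (n - L) else 0)"
    and g: "\<forall>n. 0 \<le> g n"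
  shows "m * L \<le> n + L \<Longrightarrow> (\<Sum>k<m. g (n - k * L)) \<le> F n"
proof -
  have F0: "0 \<le> F n" for n
  proof (induction n rule: less_induct)
    case (less n)
    then show ?case using rec[rule_format, of n] g[rule_format, of n] L by auto
  qed
  show "m * L \<le> n + L \<Longrightarrow> (\<Sum>k<m. g (n - k * L)) \<le> F n"
  proof (induction m arbitrary: n)
    case (Suc m)
    show ?case
    proof (cases "L \<le> n")
      case True
      have "(\<Sum>k<Suc m. g (n - k * L)) = g n + (\<Sum>k<m. g (n - L - k * L))"
        unfolding sum.lessThan_Suc_shift by (simp add: diff_diff_left)
      also have "\<dots> \<le> g n + F (n - L)" using Suc.IH[of "n - L"] Suc.prems True by simp
      also have "\<dots> = F n" using rec True by simp
      finally show ?thesis .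
    next
      case False
      then have "m = 0" using Suc.prems L by (cases m) auto
      then show ?thesis using rec[rule_format, of n] False by simp
    qed
  qed (simp add: F0)
qed

text \<open>The first n div 2L + 1 terms of the unrolled recurrence are each at least
  c ((n + 1) / 2)^d.\<close>

lemma recurrence_lower:
  fixes F g :: "nat \<Rightarrow> real"
  assumes L: "L \<ge> 1" and rec: "\<forall>n. F n = g n + (if L \<le> n then F (n - L) else 0)"
    and c: "c > 0" and g: "\<forall>n. c * (real n + 1) ^ d \<le> g n"
  shows "c / (2 * real L * 2 ^ d) * (real n + 1) ^ Suc d \<le> F n"
proof -
  define m where "m = Suc (n div (2 * L))"
  have below: "n div (2 * L) * (2 * L) \<le> n" by (rule div_times_less_eq_dividend)
  have "n mod (2 * L) < 2 * L" using L by simp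
  then have "n < m * (2 * L)" using div_mult_mod_eq[of n "2 * L"] by (simp add: m_def)
  then have "real (n + 1) \<le> real (m * (2 * L))" by (simp only: of_nat_le_iff)
  then have nm: "real n + 1 \<le> 2 * real L * real m" by (simp add: algebra_simps)
  have "n div (2 * L) * L \<le> n div (2 * L) * (2 * L)" by simp
  then have "n div (2 * L) * L \<le> n" using below by (rule order_trans)
  then have mL: "m * L \<le> n + L" by (simp add: m_def)
  have summand: "c * ((real n + 1) / 2) ^ d \<le> g (n - k * L)" if k: "k < m" for k
  proof -
    have "k * (2 * L) \<le> n" using k below unfolding m_def by (meson less_Suc_eq_le mult_le_mono1 order_trans)
    then have kL: "k * L \<le> n" by (simp add: order_trans[rotated])
    have "real (k * (2 * L)) \<le> real n" using \<open>k * (2 * L) \<le> n\<close> by (simp only: of_nat_le_iff)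
    then have "real n + 1 \<le> 2 * (real (n - k * L) + 1)" using kL by (simp add: of_nat_diff)
    then have "c * ((real n + 1) / 2) ^ d \<le> c * (real (n - k * L) + 1) ^ d"
      using c by (intro mult_left_mono power_mono) auto
    then show ?thesis using g order_trans by blast
  qed
  have g0: "\<forall>n. 0 \<le> g n"
  proof
    fix n
    have "0 \<le> c * (real n + 1) ^ d" using c by simp
    then show "0 \<le> g n" using g order_trans by blast
  qed
  have "c / (2 * real L * 2 ^ d) * (real n + 1) ^ Suc d
      = (real n + 1) / (2 * real L) * (c * ((real n + 1) / 2) ^ d)"
    by (simp add: power_divide field_simps)
  also have "\<dots> \<le> real m * (c * ((real n + 1) / 2) ^ d)"
    using nm L c by (intro mult_right_mono) (auto simp: divide_le_eq mult.commute)
  also have "\<dots> \<le> (\<Sum>k<m. g (n - k * L))" using sum_mono[of "{..<m}", OF summand] by simp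
  also have "\<dots> \<le> F n" using recurrence_ge_sum[OF L rec g0 mL] .
  finally show ?thesis .
qed

lemma poly_growth_recurrence:
  fixes F g :: "nat \<Rightarrow> real"
  assumes "L \<ge> 1" and "\<forall>n. F n = g n + (if L \<le> n then F (n - L) else 0)" and "poly_growth g d"
  shows "poly_growth F (Suc d)"
proof -
  obtain c C where c: "c > 0" and lower: "\<forall>n. c * (real n + 1) ^ d \<le> g n"
    and upper: "\<forall>n. g n \<le> C * (real n + 1) ^ d"
    using assms(3) by (auto simp: poly_growth_def)
  have "C \<ge> 0" using lower[rule_format, of 0] upper[rule_format, of 0] c by simp
  moreover have "c / (2 * real L * 2 ^ d) > 0" using c assms(1) by simp
  ultimately show ?thesis unfolding poly_growth_def
    using recurrence_lower[OF assms(1,2) c lower] recurrence_upper[OF assms(1,2) _ upper] by blast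
qed

section \<open>Polynomial growth of subtrees\<close>

definition subtree_growth :: "vert set \<Rightarrow> vert \<Rightarrow> nat \<Rightarrow> real" where
  "subtree_growth T x n = real (card (subtree_ball T x n))"

definition has_disjoint_copies :: "vert set \<Rightarrow> vert \<Rightarrow> bool" where
  "has_disjoint_copies T x \<longleftrightarrow> x \<in> T \<and> (\<exists>y1\<in>subtree T x. \<exists>y2\<in>subtree T x.
      y1 \<parallel> y2 \<and> isomorphic T y1 x \<and> isomorphic T y2 x)"

definition types_below :: "vert set \<Rightarrow> nat \<Rightarrow> vert \<Rightarrow> vert set" where
  "types_below T N x = {r \<in> ball T N. \<exists>v\<in>subtree T x. isomorphic T v r}"

lemma card_types_below_less:
  assumes R: "rooted_tree T" and LF: "locally_finite T" and P: "periodicN T N"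
    and xT: "x \<in> T" and s: "s \<in> subtree T x" and no_copy: "\<forall>v\<in>subtree T s. \<not> isomorphic T v x"
  shows "card (types_below T N s) < card (types_below T N x)"
proof (rule psubset_card_mono)
  show "finite (types_below T N x)" using finite_ball[OF R LF] by (simp add: types_below_def)
  obtain r where r: "r \<in> ball T N" and xr: "isomorphic T x r" using periodicN_isomorphic_ball[OF R P xT] by blast
  have "r \<in> types_below T N x" using r xr self_in_subtree[OF xT] by (auto simp: types_below_def)
  moreover have "r \<notin> types_below T N s"
    using no_copy isomorphic_trans isomorphic_sym[OF R xr] by (auto simp: types_below_def)
  moreover have "types_below T N s \<subseteq> types_below T N x"
    using subtree_subset[OF s] by (auto simp: types_below_def)
  ultimately show "types_below T N s \<subset> types_below T N x" by blast
qed

lemma subtree_growth_ge_1: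
  "rooted_tree T \<Longrightarrow> locally_finite T \<Longrightarrow> x \<in> T \<Longrightarrow> 1 \<le> subtree_growth T x n"
  using card_subtree_ball_pos by (simp add: subtree_growth_def)

lemma poly_growth_from_children:
  assumes R: "rooted_tree T" and LF: "locally_finite T" and xT: "x \<in> T"
    and children: "\<forall>c\<in>children T x. \<exists>d. poly_growth (subtree_growth T c) d"
  shows "\<exists>d. poly_growth (subtree_growth T x) d"
proof (rule poly_growth_squeeze[OF finite_children[OF LF xT] children])
  show "\<forall>n. 1 \<le> subtree_growth T x n" using subtree_growth_ge_1[OF R LF xT] by blast
  let ?C = "children T x"
  show "\<forall>n. subtree_growth T x n \<le> 1 + (\<Sum>c\<in>?C. subtree_growth T c n)"
  proof
    fix n
    have "subtree_ball T x n \<subseteq> {x} \<union> (\<Union>c\<in>?C. subtree_ball T c n)"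
    proof
      fix v assume v: "v \<in> subtree_ball T x n"
      then obtain z where vz: "v = x @ z" and vT: "v \<in> T" and vl: "length v \<le> length x + n"
        by (auto simp: subtree_ball_def subtree_def)
      show "v \<in> {x} \<union> (\<Union>c\<in>?C. subtree_ball T c n)"
      proof (cases z)
        case (Cons i z')
        then have "x @ [i] \<in> T" using rooted_tree_prefix_closed[OF R vT] vz by simp
        moreover have "v \<in> subtree_ball T (x @ [i]) n"
          using vT vz vl Cons by (auto simp: subtree_ball_def subtree_def)
        ultimately show ?thesis unfolding children_def by blast
      qed (simp add: vz)
    qed
    moreover have "finite (\<Union>c\<in>?C. subtree_ball T c n)"
      by (rule finite_UN_I[OF finite_children[OF LF xT] finite_subtree_ball[OF R LF]])
    ultimately have "card (subtree_ball T x n) \<le> card ({x} \<union> (\<Union>c\<in>?C. subtree_ball T c n))"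
      by (intro card_mono) auto
    also have "\<dots> \<le> card {x} + card (\<Union>c\<in>?C. subtree_ball T c n)" by (rule card_Un_le)
    also have "\<dots> \<le> 1 + (\<Sum>c\<in>?C. card (subtree_ball T c n))"
      using card_UN_le[OF finite_children[OF LF xT], of "\<lambda>c. subtree_ball T c n"] by simp
    finally show "subtree_growth T x n \<le> 1 + (\<Sum>c\<in>?C. subtree_growth T c n)"
      by (simp add: subtree_growth_def flip: of_nat_sum)
  qed
  show "\<forall>c\<in>?C. \<forall>n::nat\<ge>1. subtree_growth T c (n - 1) \<le> subtree_growth T x n"
  proof (intro ballI allI impI)
    fix c and n :: nat assume "c \<in> ?C" and n: "n \<ge> 1"
    then have "subtree_ball T c (n - 1) \<subseteq> subtree_ball T x n"
      by (auto simp: children_def subtree_ball_def subtree_def)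
    then show "subtree_growth T c (n - 1) \<le> subtree_growth T x n"
      using finite_subtree_ball[OF R LF] by (simp add: subtree_growth_def card_mono)
  qed
qed

lemma parallel_branch_point:
  assumes vw: "v \<parallel> w" and xv: "prefix x v" and xw: "prefix x w"
  obtains as b where "prefix x as" "strict_prefix as w" "prefix (as @ [b]) v" "as @ [b] \<parallel> w"
proof -
  obtain as b bs c cs where bc: "b \<noteq> c" and v: "v = as @ b # bs" and w: "w = as @ c # cs"
    using parallel_decomp[OF vw] by blast
  have par: "as @ [b] \<parallel> w" using bc w by (auto simp: parallel_def)
  have abv: "prefix (as @ [b]) v" using v by simp
  have "prefix x as"
    using prefix_same_cases[OF xv abv]
  proof
    assume "prefix x (as @ [b])"
    then show ?thesis using par xw by (auto simp: parallel_def)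
  next
    assume "prefix (as @ [b]) x"
    then show ?thesis using par xw by (meson parallelD1 prefix_order.trans)
  qed
  moreover have "strict_prefix as w" using w by (simp add: strict_prefix_def)
  ultimately show ?thesis using that par abv by blast
qed

definition side_vertices :: "vert set \<Rightarrow> vert \<Rightarrow> vert \<Rightarrow> vert set" where
  "side_vertices T x y = {s \<in> T. \<exists>as b. s = as @ [b] \<and> prefix x as \<and> strict_prefix as y \<and> s \<parallel> y}"

lemma finite_side_vertices:
  assumes "rooted_tree T" "locally_finite T" "y \<in> T"
  shows "finite (side_vertices T x y)"
proof (rule finite_subset)
  show "side_vertices T x y \<subseteq> (\<Union>as\<in>{as. prefix as y}. children T as)"
    by (auto simp: side_vertices_def children_def)
  have "finite {as. prefix as y}" by (simp flip: set_prefixes_eq)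
  moreover have "as \<in> T" if "prefix as y" for as using rooted_tree_prefix_closed assms(1,3) that .
  ultimately show "finite (\<Union>as\<in>{as. prefix as y}. children T as)"
    using finite_children[OF assms(2)] by blast
qed

lemma side_vertices_subtree: "s \<in> side_vertices T x y \<Longrightarrow> s \<in> subtree T x"
  by (auto simp: side_vertices_def subtree_eq)

lemma subtree_ball_outside_copy_cover:
  assumes R: "rooted_tree T" and xy: "prefix x y"
  shows "subtree_ball T x n - subtree T y \<subseteq> {as. strict_prefix as y} \<union> (\<Union>s\<in>side_vertices T x y. subtree_ball T s n)"
proof
  fix v assume v: "v \<in> subtree_ball T x n - subtree T y"
  then have vT: "v \<in> T" and xv: "prefix x v" and vl: "length v \<le> length x + n" and yv: "\<not> prefix y v"
    by (auto simp: subtree_ball_def subtree_eq)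
  show "v \<in> {as. strict_prefix as y} \<union> (\<Union>s\<in>side_vertices T x y. subtree_ball T s n)"
  proof (cases "prefix v y")
    case True
    then show ?thesis using yv by (auto simp: strict_prefix_def)
  next
    case False
    then have "v \<parallel> y" using yv by (simp add: parallel_def)
    then obtain as b where "prefix x as" "strict_prefix as y" and s: "prefix (as @ [b]) v" "as @ [b] \<parallel> y"
      using parallel_branch_point xv xy by blast
    moreover have "as @ [b] \<in> T" using rooted_tree_prefix_closed[OF R vT s(1)] .
    moreover have "length x \<le> length (as @ [b])" using \<open>prefix x as\<close> by (simp add: prefix_length_le le_SucI)
    ultimately have "as @ [b] \<in> side_vertices T x y" and "v \<in> subtree_ball T (as @ [b]) n"
      using vT vl by (auto simp: side_vertices_def subtree_ball_def subtree_eq)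
    then show ?thesis by blast
  qed
qed

lemma subtree_ball_side_vertex_subset:
  assumes s: "s \<in> side_vertices T x y" and n: "length s - length x \<le> n"
  shows "subtree_ball T s (n - (length s - length x)) \<subseteq> subtree_ball T x n - subtree T y"
proof
  fix v assume v: "v \<in> subtree_ball T s (n - (length s - length x))"
  have xs: "prefix x s" and sy: "s \<parallel> y" using s by (auto simp: side_vertices_def)
  have sv: "prefix s v" and vT: "v \<in> T" using v by (auto simp: subtree_ball_def subtree_eq)
  have "length x \<le> length s" using prefix_length_le[OF xs] .
  then have "length v \<le> length x + n" using v n by (simp add: subtree_ball_def)
  moreover have "v \<parallel> y" using sy sv by (auto simp: prefix_def intro: parallel_appendI)
  ultimately show "v \<in> subtree_ball T x n - subtree T y"
    using vT prefix_order.trans[OF xs sv] by (auto simp: subtree_ball_def subtree_eq parallel_def)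
qed

lemma subtree_growth_copy_recurrence:
  assumes R: "rooted_tree T" and LF: "locally_finite T"
    and y: "y \<in> subtree T x" and yx: "isomorphic T y x"
  shows "subtree_growth T x n = real (card (subtree_ball T x n - subtree T y)) +
    (if length y - length x \<le> n then subtree_growth T x (n - (length y - length x)) else 0)"
proof -
  let ?L = "length y - length x"
  have xy: "length x \<le> length y" using y by (auto simp: subtree_eq prefix_length_le)
  have "subtree_ball T x n \<inter> subtree T y = (if ?L \<le> n then subtree_ball T y (n - ?L) else {})"
    using xy subtree_subset[OF y] by (auto simp: subtree_ball_def subtree_eq prefix_length_le
        dest: prefix_length_le)
  moreover have "card (subtree_ball T y (n - ?L)) = card (subtree_ball T x (n - ?L))"
    using isomorphic_card_subtree_ball[OF R yx] .
  ultimately show ?thesis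
    using card_Int_Diff[OF finite_subtree_ball[OF R LF], of x n "subtree T y"]
    by (simp add: subtree_growth_def)
qed

lemma card_subtree_ball_outside_copy_le:
  assumes R: "rooted_tree T" and LF: "locally_finite T" and yT: "y \<in> T" and xy: "prefix x y"
  shows "card (subtree_ball T x n - subtree T y)
    \<le> card {as. strict_prefix as y} + (\<Sum>s\<in>side_vertices T x y. card (subtree_ball T s n))"
proof -
  let ?S = "side_vertices T x y"
  have "finite (\<Union>s\<in>?S. subtree_ball T s n)"
    using finite_side_vertices[OF R LF yT] finite_subtree_ball[OF R LF] by blast
  moreover have "finite {as. strict_prefix as y}"
    using finite_subset[of _ "{as. prefix as y}"] by (auto simp: strict_prefix_def simp flip: set_prefixes_eq)
  ultimately have "card (subtree_ball T x n - subtree T y)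
      \<le> card ({as. strict_prefix as y} \<union> (\<Union>s\<in>?S. subtree_ball T s n))"
    using subtree_ball_outside_copy_cover[OF R xy] by (intro card_mono) auto
  also have "\<dots> \<le> card {as. strict_prefix as y} + card (\<Union>s\<in>?S. subtree_ball T s n)"
    by (rule card_Un_le)
  also have "\<dots> \<le> card {as. strict_prefix as y} + (\<Sum>s\<in>?S. card (subtree_ball T s n))"
    using card_UN_le[OF finite_side_vertices[OF R LF yT], of "\<lambda>s. subtree_ball T s n"] by simp
  finally show ?thesis .
qed

lemma side_vertices_no_copy:
  assumes no_copies: "\<not> has_disjoint_copies T x" and xT: "x \<in> T"
    and y: "y \<in> subtree T x" "isomorphic T y x"
    and s: "s \<in> side_vertices T x y" and v: "v \<in> subtree T s"
  shows "\<not> isomorphic T v x"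
proof
  assume vx: "isomorphic T v x"
  have "v \<parallel> y" using s v by (auto simp: side_vertices_def subtree_eq prefix_def intro: parallel_appendI)
  moreover have "v \<in> subtree T x" using subtree_subset[OF side_vertices_subtree[OF s]] v by blast
  ultimately show False using no_copies xT y vx unfolding has_disjoint_copies_def by blast
qed

lemma poly_growth_outside_copy:
  assumes R: "rooted_tree T" and LF: "locally_finite T"
    and y: "y \<in> subtree T x" "y \<noteq> x" "isomorphic T y x"
    and no_copies: "\<not> has_disjoint_copies T x"
    and IH: "\<forall>s\<in>subtree T x. (\<forall>v\<in>subtree T s. \<not> isomorphic T v x) \<longrightarrow>
               (\<exists>d. poly_growth (subtree_growth T s) d)"
  shows "\<exists>d. poly_growth (\<lambda>n. real (card (subtree_ball T x n - subtree T y))) d"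
proof (rule poly_growth_squeeze)
  have yT: "y \<in> T" and xy: "prefix x y" using y(1) by (auto simp: subtree_eq)
  have xT: "x \<in> T" using rooted_tree_prefix_closed[OF R yT xy] .
  let ?S = "side_vertices T x y"
  show "finite ?S" using finite_side_vertices[OF R LF yT] .
  show "\<forall>s\<in>?S. \<exists>d. poly_growth (subtree_growth T s) d"
    using IH side_vertices_subtree side_vertices_no_copy[OF no_copies xT y(1,3)] by blast
  have fin: "finite (subtree_ball T x n - subtree T y)" for n
    using finite_subtree_ball[OF R LF] by blast
  show "\<forall>n. 1 \<le> real (card (subtree_ball T x n - subtree T y))"
  proof
    fix n
    have "\<not> prefix y x" using y(2) xy prefix_order.antisym by blast
    then have "x \<in> subtree_ball T x n - subtree T y"
      using xT by (simp add: subtree_ball_def subtree_eq)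
    then show "1 \<le> real (card (subtree_ball T x n - subtree T y))"
      using fin by (metis One_nat_def Suc_leI card_gt_0_iff empty_iff of_nat_1 of_nat_le_iff)
  qed
  show "\<forall>n. real (card (subtree_ball T x n - subtree T y)) \<le>
      real (card {as. strict_prefix as y}) + (\<Sum>s\<in>?S. subtree_growth T s n)"
    using card_subtree_ball_outside_copy_le[OF R LF yT xy]
    by (simp add: subtree_growth_def flip: of_nat_sum of_nat_add)
  show "\<forall>s\<in>?S. \<forall>n \<ge> length s - length x.
      subtree_growth T s (n - (length s - length x)) \<le> real (card (subtree_ball T x n - subtree T y))"
    using subtree_ball_side_vertex_subset fin by (simp add: subtree_growth_def card_mono)
qed

lemma poly_growth_with_copy:
  assumes R: "rooted_tree T" and LF: "locally_finite T"
    and y: "y \<in> subtree T x" "y \<noteq> x" "isomorphic T y x"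
    and no_copies: "\<not> has_disjoint_copies T x"
    and IH: "\<forall>s\<in>subtree T x. (\<forall>v\<in>subtree T s. \<not> isomorphic T v x) \<longrightarrow>
               (\<exists>d. poly_growth (subtree_growth T s) d)"
  shows "\<exists>d. poly_growth (subtree_growth T x) d"
proof -
  obtain d where d: "poly_growth (\<lambda>n. real (card (subtree_ball T x n - subtree T y))) d"
    using poly_growth_outside_copy[OF assms] by blast
  have "strict_prefix x y" using y(1,2) by (auto simp: subtree_eq strict_prefix_def)
  then have L: "length y - length x \<ge> 1" using prefix_length_less by fastforce
  show ?thesis
    using poly_growth_recurrence[OF L _ d] subtree_growth_copy_recurrence[OF R LF y(1,3)] by blast
qed

lemma poly_growth_subtrees:
  assumes R: "rooted_tree T" and LF: "locally_finite T" and P: "periodicN T N"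
    and no_copies: "\<forall>x. \<not> has_disjoint_copies T x"
  shows "x \<in> T \<Longrightarrow> \<exists>d. poly_growth (subtree_growth T x) d"
proof (induction "card (types_below T N x)" arbitrary: x rule: less_induct)
  case less
  have IH: "\<forall>s\<in>subtree T x. (\<forall>v\<in>subtree T s. \<not> isomorphic T v x) \<longrightarrow>
      (\<exists>d. poly_growth (subtree_growth T s) d)"
  proof (intro ballI impI)
    fix s assume s: "s \<in> subtree T x" and no_copy: "\<forall>v\<in>subtree T s. \<not> isomorphic T v x"
    have "s \<in> T" using s by (simp add: subtree_def)
    then show "\<exists>d. poly_growth (subtree_growth T s) d"
      using less.hyps[OF card_types_below_less[OF R LF P less.prems s no_copy]] by blast
  qed
  show ?case
  proof (cases "\<exists>y\<in>subtree T x. y \<noteq> x \<and> isomorphic T y x")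
    case True
    then obtain y where "y \<in> subtree T x" "y \<noteq> x" "isomorphic T y x" by blast
    then show ?thesis using poly_growth_with_copy[OF R LF _ _ _ _ IH] no_copies by blast
  next
    case False
    have "\<exists>d. poly_growth (subtree_growth T c) d" if c: "c \<in> children T x" for c
    proof -
      have cx: "c \<in> subtree T x" using c by (auto simp: children_def subtree_def)
      have "v \<noteq> x" if "v \<in> subtree T c" for v using that c by (auto simp: children_def subtree_def)
      then show ?thesis using IH cx False subtree_subset[OF cx] by blast
    qed
    then show ?thesis using poly_growth_from_children[OF R LF less.prems] by blast
  qed
qed

lemma poly_growth_degree_pos:
  assumes "poly_growth f d" and "\<forall>n. real n + 1 \<le> f n"
  shows "d \<ge> 1"
proof (rule ccontr)
  assume "\<not> d \<ge> 1"
  then have "d = 0" by simp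
  moreover obtain C where "\<forall>n. f n \<le> C * (real n + 1) ^ d" using assms(1) by (auto simp: poly_growth_def)
  ultimately have "f (nat \<lceil>C\<rceil>) \<le> C" by simp
  moreover have "real (nat \<lceil>C\<rceil>) + 1 \<le> f (nat \<lceil>C\<rceil>)" using assms(2) by blast
  ultimately show False by linarith
qed

lemma poly_growth_ratio_bounds:
  assumes "poly_growth f d"
  shows "\<exists>c C. 0 < c \<and> 0 < C \<and> (\<forall>n::nat. n \<ge> 1 \<longrightarrow> c \<le> f n / real n ^ d \<and> f n / real n ^ d \<le> C)"
proof -
  obtain c C where c: "c > 0" and lower: "\<forall>n. c * (real n + 1) ^ d \<le> f n"
    and upper: "\<forall>n. f n \<le> C * (real n + 1) ^ d"
    using assms by (auto simp: poly_growth_def)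
  have C: "C > 0" using lower[rule_format, of 0] upper[rule_format, of 0] c by simp
  have "c \<le> f n / real n ^ d \<and> f n / real n ^ d \<le> C * 2 ^ d" if n: "n \<ge> 1" for n
  proof -
    have np: "real n ^ d > 0" using n by simp
    have "c * real n ^ d \<le> c * (real n + 1) ^ d" using c by (intro mult_left_mono power_mono) auto
    then have "c * real n ^ d \<le> f n" using lower order_trans by blast
    moreover have "(real n + 1) ^ d \<le> (2 * real n) ^ d" using n by (intro power_mono) auto
    then have "C * (real n + 1) ^ d \<le> C * 2 ^ d * real n ^ d"
      using C by (simp add: mult.assoc power_mult_distrib)
    then have "f n \<le> C * 2 ^ d * real n ^ d" using upper order_trans by blast
    ultimately show ?thesis using np by (simp add: le_divide_eq divide_le_eq)
  qed
  then show ?thesis using c C by (intro exI[of _ c] exI[of _ "C * 2 ^ d"]) simp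
qed

section \<open>Cutsets and the branching number\<close>

lemma cutsum_mono: "A \<subseteq> B \<Longrightarrow> cutsum lam A \<le> cutsum lam B"
  unfolding cutsum_def by (rule SUP_subset_mono) auto

lemma cutsum_ge_edge: "e \<in> A \<Longrightarrow> ennreal (lam powr - real (length (snd e))) \<le> cutsum lam A"
  unfolding cutsum_def by (rule SUP_upper2[of "{e}"]) auto

lemma cutsum_Un_disjoint_ge:
  assumes "A \<inter> B = {}"
  shows "cutsum lam A + cutsum lam B \<le> cutsum lam (A \<union> B)"
proof -
  define f where "f F = (\<Sum>e\<in>F. ennreal (lam powr - real (length (snd e))))" for F :: "(vert \<times> vert) set"
  have cs: "cutsum lam X = (SUP F\<in>{F. finite F \<and> F \<subseteq> X}. f F)" for X
    by (simp add: cutsum_def f_def)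
  have ne: "{F. finite F \<and> F \<subseteq> X} \<noteq> {}" for X :: "(vert \<times> vert) set" by auto
  have "cutsum lam A + cutsum lam B
      = (SUP F\<in>{F. finite F \<and> F \<subseteq> A}. f F + (SUP G\<in>{G. finite G \<and> G \<subseteq> B}. f G))"
    unfolding cs by (rule ennreal_SUP_add_left[OF ne, symmetric])
  also have "\<dots> = (SUP F\<in>{F. finite F \<and> F \<subseteq> A}. SUP G\<in>{G. finite G \<and> G \<subseteq> B}. f F + f G)"
    by (simp add: ennreal_SUP_add_right[OF ne])
  also have "\<dots> \<le> cutsum lam (A \<union> B)"
  proof (intro SUP_least)
    fix F G assume F: "F \<in> {F. finite F \<and> F \<subseteq> A}" and G: "G \<in> {G. finite G \<and> G \<subseteq> B}"
    then have "f F + f G = f (F \<union> G)" using assms unfolding f_def by (intro sum.union_disjoint[symmetric]) auto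
    also have "\<dots> \<le> cutsum lam (A \<union> B)" unfolding cs by (rule SUP_upper) (use F G in auto)
    finally show "f F + f G \<le> cutsum lam (A \<union> B)" .
  qed
  finally show ?thesis .
qed

definition avoids_path :: "(vert \<times> vert) set \<Rightarrow> vert \<Rightarrow> vert \<Rightarrow> bool" where
  "avoids_path \<pi> v w \<longleftrightarrow> (\<forall>k. length v \<le> k \<and> k < length w \<longrightarrow> (take k w, take (Suc k) w) \<notin> \<pi>)"

lemma avoids_path_trans:
  assumes "prefix v w" "avoids_path \<pi> u v" "avoids_path \<pi> v w"
  shows "avoids_path \<pi> u w"
  unfolding avoids_path_def
proof (intro allI impI)
  fix k assume k: "length u \<le> k \<and> k < length w"
  show "(take k w, take (Suc k) w) \<notin> \<pi>"
  proof (cases "k < length v")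
    case True
    then have "take k w = take k v" "take (Suc k) w = take (Suc k) v"
      using assms(1) by (auto simp: prefix_def)
    then show ?thesis using assms(2) k True by (simp add: avoids_path_def)
  qed (use assms(3) k in \<open>simp add: avoids_path_def\<close>)
qed

lemma descent_not_cutset:
  assumes R: "rooted_tree T" and x: "P x" "avoids_path \<pi> [] x"
    and inT: "\<And>v. P v \<Longrightarrow> v \<in> T"
    and step: "\<And>v. P v \<Longrightarrow> \<exists>w. strict_prefix v w \<and> P w \<and> avoids_path \<pi> v w"
  shows "\<pi> \<notin> cutsets T"
proof
  assume cut: "\<pi> \<in> cutsets T"
  obtain next_vertex where nxt: "\<And>v. P v \<Longrightarrow> strict_prefix v (next_vertex v) \<and> P (next_vertex v) \<and>
      avoids_path \<pi> v (next_vertex v)"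
    using step by metis
  define w where "w n = (next_vertex ^^ n) x" for n
  have w: "P (w n) \<and> avoids_path \<pi> [] (w n) \<and> n \<le> length (w n)" for n
  proof (induction n)
    case (Suc n)
    then have "strict_prefix (w n) (w (Suc n))" "P (w (Suc n))" "avoids_path \<pi> (w n) (w (Suc n))"
      using nxt by (simp_all add: w_def)
    then show ?case
      using Suc avoids_path_trans prefix_length_less by (fastforce simp: strict_prefix_def)
  qed (simp add: w_def x)
  have mono: "prefix (w m) (w n)" if "m \<le> n" for m n
    using that
  proof (induction n)
    case (Suc n)
    then show ?case using nxt[of "w n"] w[of n]
      by (auto simp: w_def le_Suc_eq strict_prefix_def intro: prefix_order.trans)
  qed simp
  define p where "p n = take n (w n)" for n
  have p_take: "p n = take n (w (Suc n))" for n
    using mono[of n "Suc n"] w[of n] by (auto simp: p_def prefix_def)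
  have "ray T p"
    unfolding ray_def
  proof (intro conjI allI)
    fix n
    have "Suc n \<le> length (w (Suc n))" using w by blast
    then have "p (Suc n) = take n (w (Suc n)) @ [w (Suc n) ! n]"
      by (simp add: p_def take_Suc_conv_app_nth)
    then show "\<exists>i. p (Suc n) = p n @ [i]" by (simp add: p_take)
    show "p (Suc n) \<in> T" unfolding p_def using rooted_tree_prefix_closed[OF R inT take_is_prefix] w by blast
  qed (simp add: p_def)
  then obtain n where "(p n, p (Suc n)) \<in> \<pi>" using cut by (auto simp: cutsets_def)
  moreover have "avoids_path \<pi> [] (w (Suc n))" "Suc n \<le> length (w (Suc n))" using w by blast+
  moreover have "p n = take n (w (Suc n))" by (rule p_take)
  moreover have "p (Suc n) = take (Suc n) (w (Suc n))" by (simp only: p_def)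
  ultimately show False by (simp add: avoids_path_def)
qed

definition cut_below :: "(vert \<times> vert) set \<Rightarrow> vert \<Rightarrow> (vert \<times> vert) set" where
  "cut_below \<pi> v = {e \<in> \<pi>. prefix v (fst e)}"

lemma cut_below_Nil: "cut_below \<pi> [] = \<pi>"
  by (auto simp: cut_below_def)

lemma cut_below_antimono: "prefix u w \<Longrightarrow> cut_below \<pi> w \<subseteq> cut_below \<pi> u"
  by (auto simp: cut_below_def intro: prefix_order.trans)

lemma cut_below_disjoint: "u \<parallel> w \<Longrightarrow> cut_below \<pi> u \<inter> cut_below \<pi> w = {}"
  by (auto simp: cut_below_def parallel_def dest: prefix_same_cases)

lemma light_cut_avoids_path:
  assumes lam: "1 \<le> lam" and vw: "prefix v w"
    and light: "cutsum lam (cut_below \<pi> v) < ennreal (lam powr - real (length w))"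
  shows "avoids_path \<pi> v w"
  unfolding avoids_path_def
proof (intro allI impI notI)
  fix k assume k: "length v \<le> k \<and> k < length w" and e: "(take k w, take (Suc k) w) \<in> \<pi>"
  have "prefix v (take k w)" using vw k by (auto simp: prefix_def)
  then have "(take k w, take (Suc k) w) \<in> cut_below \<pi> v" using e by (simp add: cut_below_def)
  from cutsum_ge_edge[OF this] have "ennreal (lam powr - real (Suc k)) \<le> cutsum lam (cut_below \<pi> v)"
    using k by simp
  moreover have "lam powr - real (length w) \<le> lam powr - real (Suc k)" using lam k by (intro powr_mono) auto
  ultimately show False using light by (meson ennreal_leI order.trans not_le)
qed

definition light_copy :: "vert set \<Rightarrow> real \<Rightarrow> (vert \<times> vert) set \<Rightarrow> vert \<Rightarrow> vert \<Rightarrow> bool" where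
  "light_copy T lam \<pi> x v \<longleftrightarrow>
     isomorphic T v x \<and> cutsum lam (cut_below \<pi> v) < ennreal (lam powr - real (length v) / 2)"

lemma subtree_iso_proper_copy_image:
  assumes R: "rooted_tree T" and I: "subtree_iso T x v \<phi>"
    and y: "y \<in> subtree T x" "y \<noteq> x" "isomorphic T y x"
  shows "strict_prefix v (\<phi> y) \<and> isomorphic T (\<phi> y) x \<and>
    length (\<phi> y) + length x = length y + length v"
proof -
  have "isomorphic T y (\<phi> y)"
    using subtree_iso_restrict[OF R I y(1)] y(1) by (auto simp: isomorphic_def subtree_def)
  then have iso: "isomorphic T (\<phi> y) x" using isomorphic_sym[OF R] isomorphic_trans y(3) by blast
  have img: "\<phi> y \<in> subtree T v" "length (\<phi> y) + length x = length y + length v"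
    using subtree_iso_length[OF R I y(1)] by blast+
  have "strict_prefix x y" using y(1,2) by (auto simp: subtree_eq strict_prefix_def)
  then have "length v < length (\<phi> y)" using img(2) prefix_length_less by fastforce
  moreover have "prefix v (\<phi> y)" using img(1) by (simp add: subtree_eq)
  ultimately have "strict_prefix v (\<phi> y)" unfolding strict_prefix_def by auto
  then show ?thesis using iso img(2) by blast
qed

lemma not_light_copy_cut_weight:
  assumes "\<not> light_copy T lam \<pi> x w" "isomorphic T w x" "a / 2 \<le> lam powr - real (length w)"
  shows "ennreal (a / 4) \<le> cutsum lam (cut_below \<pi> w)"
proof -
  have "ennreal (lam powr - real (length w) / 2) \<le> cutsum lam (cut_below \<pi> w)"
    using assms(1,2) by (simp add: light_copy_def not_less)
  moreover have "a / 4 \<le> lam powr - real (length w) / 2" using assms(3) by simp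
  ultimately show ?thesis by (meson ennreal_leI order.trans)
qed

text \<open>The images of the two copies lie at most L below v, so as lam^L = 2 a copy that is
  not light carries cut weight at least a quarter of the bound of v; if neither were light,
  v would not be light either.\<close>

lemma light_copy_descends:
  assumes R: "rooted_tree T"
    and y1: "y1 \<in> subtree T x" "isomorphic T y1 x" "length y1 \<le> length x + L"
    and y2: "y2 \<in> subtree T x" "isomorphic T y2 x" "length y2 \<le> length x + L"
    and par: "y1 \<parallel> y2"
    and lam: "1 \<le> lam" "\<forall>m. lam powr - real (m + L) = lam powr - real m / 2"
    and v: "light_copy T lam \<pi> x v"
  shows "\<exists>w. strict_prefix v w \<and> light_copy T lam \<pi> x w \<and> avoids_path \<pi> v w"
proof -
  have "isomorphic T v x" using v by (simp add: light_copy_def)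
  then obtain \<phi> where I: "subtree_iso T x v \<phi>" using isomorphic_sym[OF R] isomorphic_def by blast
  let ?bound = "lam powr - real (length v)"
  have light_v: "cutsum lam (cut_below \<pi> v) < ennreal (?bound / 2)"
    using v by (simp add: light_copy_def)
  have image: "strict_prefix v (\<phi> y) \<and> isomorphic T (\<phi> y) x \<and> ?bound / 2 \<le> lam powr - real (length (\<phi> y))"
    if y: "y \<in> subtree T x" "y \<noteq> x" "isomorphic T y x" "length y \<le> length x + L" for y
  proof -
    note img = subtree_iso_proper_copy_image[OF R I y(1-3)]
    have "lam powr - real (length v + L) \<le> lam powr - real (length (\<phi> y))"
      using lam(1) img y(4) by (intro powr_mono) auto
    then show ?thesis using img lam(2)[rule_format, of "length v"] by auto
  qed
  have "y1 \<noteq> x" "y2 \<noteq> x" using par y1(1) y2(1) by (auto simp: parallel_def subtree_eq)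
  note z1 = image[OF y1(1) \<open>y1 \<noteq> x\<close> y1(2,3)] and z2 = image[OF y2(1) \<open>y2 \<noteq> x\<close> y2(2,3)]
  have avoid: "avoids_path \<pi> v w" if "strict_prefix v w" "?bound / 2 \<le> lam powr - real (length w)" for w
  proof -
    have "cutsum lam (cut_below \<pi> v) < ennreal (lam powr - real (length w))"
      using light_v ennreal_leI[OF that(2)] by (rule order.strict_trans2)
    then show ?thesis using lam(1) that(1) light_cut_avoids_path strict_prefix_def by blast
  qed
  show ?thesis
  proof (rule ccontr)
    assume "\<not> ?thesis"
    then have heavy: "\<not> light_copy T lam \<pi> x (\<phi> y1)" "\<not> light_copy T lam \<pi> x (\<phi> y2)"
      using z1 z2 avoid by blast+
    have "\<phi> y1 \<parallel> \<phi> y2"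
      using par subtree_iso_prefix_iff[OF R I y1(1) y2(1)] subtree_iso_prefix_iff[OF R I y2(1) y1(1)]
      by (simp add: parallel_def)
    then have "cutsum lam (cut_below \<pi> (\<phi> y1)) + cutsum lam (cut_below \<pi> (\<phi> y2))
        \<le> cutsum lam (cut_below \<pi> (\<phi> y1) \<union> cut_below \<pi> (\<phi> y2))"
      by (intro cutsum_Un_disjoint_ge cut_below_disjoint)
    also have "\<dots> \<le> cutsum lam (cut_below \<pi> v)"
      using z1 z2 cut_below_antimono by (intro cutsum_mono) (auto simp: strict_prefix_def)
    finally have "ennreal (?bound / 4) + ennreal (?bound / 4) \<le> cutsum lam (cut_below \<pi> v)"
      using add_mono[OF not_light_copy_cut_weight[OF heavy(1)] not_light_copy_cut_weight[OF heavy(2)]]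
        z1 z2 by (meson order.trans)
    then have "ennreal (?bound / 2) \<le> cutsum lam (cut_below \<pi> v)" by (simp flip: ennreal_plus)
    then show False using light_v by simp
  qed
qed

lemma two_root_powr:
  assumes "L \<ge> (1::nat)"
  shows "1 < 2 powr (1 / real L)"
    and "(2 powr (1 / real L)) powr - real (m + L) = (2 powr (1 / real L)) powr - real m / 2"
proof -
  show "1 < 2 powr (1 / real L)" using assms by simp
  let ?lam = "2 powr (1 / real L) :: real"
  have "?lam powr real L = 2" using assms by (simp add: powr_powr)
  then have half: "?lam powr (- real L) = 1 / 2" by (simp add: powr_minus)
  have "?lam powr - real (m + L) = ?lam powr (- real m + - real L)" by simp
  also have "\<dots> = ?lam powr (- real m) * ?lam powr (- real L)" by (rule powr_add)
  finally show "?lam powr - real (m + L) = ?lam powr - real m / 2" using half by simp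
qed

lemma disjoint_copies_cutsum_bound:
  assumes R: "rooted_tree T" and xT: "x \<in> T"
    and y1: "y1 \<in> subtree T x" "isomorphic T y1 x" "length y1 \<le> length x + L"
    and y2: "y2 \<in> subtree T x" "isomorphic T y2 x" "length y2 \<le> length x + L"
    and par: "y1 \<parallel> y2"
    and lam: "1 \<le> lam" "\<forall>m. lam powr - real (m + L) = lam powr - real m / 2"
    and cut: "\<pi> \<in> cutsets T"
  shows "ennreal (lam powr - real (length x) / 2) \<le> cutsum lam \<pi>"
proof (rule ccontr)
  assume "\<not> ?thesis"
  then have light: "cutsum lam \<pi> < ennreal (lam powr - real (length x) / 2)" by simp
  have "cutsum lam (cut_below \<pi> x) \<le> cutsum lam \<pi>"
    using cut_below_antimono[of "[]" x \<pi>] by (simp add: cut_below_Nil cutsum_mono)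
  then have "light_copy T lam \<pi> x x"
    using light isomorphic_refl[OF xT] by (simp add: light_copy_def)
  moreover have "avoids_path \<pi> [] x"
  proof (rule light_cut_avoids_path[OF lam(1)])
    have "ennreal (lam powr - real (length x) / 2) \<le> ennreal (lam powr - real (length x))"
      by (intro ennreal_leI) simp
    with light show "cutsum lam (cut_below \<pi> []) < ennreal (lam powr - real (length x))"
      unfolding cut_below_Nil by (rule order.strict_trans2)
  qed simp
  moreover have "v \<in> T" if "light_copy T lam \<pi> x v" for v
    using that by (simp add: light_copy_def isomorphic_def)
  ultimately have "\<pi> \<notin> cutsets T"
    using light_copy_descends[OF R y1 y2 par lam] by (rule descent_not_cutset[OF R])
  then show False using cut by blast
qed

lemma branching_number_gt_1:
  assumes "1 < lam" "0 < \<delta>" "\<forall>\<pi>\<in>cutsets T. ennreal \<delta> \<le> cutsum lam \<pi>"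
  shows "1 < branching_number T"
proof -
  have "ennreal \<delta> \<le> (INF \<pi>\<in>cutsets T. cutsum lam \<pi>)" using assms(3) by (simp add: le_INF_iff)
  moreover have "0 < ennreal \<delta>" using assms(2) by simp
  ultimately have "0 < (INF \<pi>\<in>cutsets T. cutsum lam \<pi>)" by (rule order.strict_trans2[rotated])
  then have "ereal lam \<le> branching_number T"
    unfolding branching_number_def using assms(1) by (intro Sup_upper) auto
  moreover have "(1::ereal) < ereal lam" using assms(1) by simp
  ultimately show ?thesis by (rule order.strict_trans2[rotated])
qed

lemma disjoint_copies_branching_number:
  assumes R: "rooted_tree T" and copies: "has_disjoint_copies T x"
  shows "1 < branching_number T"
proof -
  obtain y1 y2 where xT: "x \<in> T" and y: "y1 \<in> subtree T x" "y2 \<in> subtree T x" "y1 \<parallel> y2"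
    "isomorphic T y1 x" "isomorphic T y2 x"
    using copies unfolding has_disjoint_copies_def by blast
  define L where "L = max (length y1) (length y2) - length x"
  have "prefix x y1" "prefix x y2" using y(1,2) by (simp_all add: subtree_eq)
  then have "strict_prefix x y1" using y(3) by (auto simp: strict_prefix_def parallel_def)
  then have "length x < length y1" by (rule prefix_length_less)
  then have L: "L \<ge> 1" and len: "length y1 \<le> length x + L" "length y2 \<le> length x + L"
    by (auto simp: L_def max_def)
  define lam where "lam = 2 powr (1 / real L)"
  have lam: "1 < lam" using two_root_powr(1)[OF L] by (simp add: lam_def)
  have halving: "\<forall>m. lam powr - real (m + L) = lam powr - real m / 2"
    unfolding lam_def using two_root_powr(2)[OF L] by blast
  have "0 < lam powr - real (length x) / 2" using lam by simp
  moreover have "\<forall>\<pi>\<in>cutsets T. ennreal (lam powr - real (length x) / 2) \<le> cutsum lam \<pi>"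
  proof
    fix \<pi> assume "\<pi> \<in> cutsets T"
    then show "ennreal (lam powr - real (length x) / 2) \<le> cutsum lam \<pi>"
      by (rule disjoint_copies_cutsum_bound[OF R xT y(1,4) len(1) y(2,5) len(2) y(3)
            less_imp_le[OF lam] halving])
  qed
  ultimately show ?thesis by (rule branching_number_gt_1[OF lam])
qed

theorem proposition3p1:
  fixes T :: "nat list set"
  assumes "rooted_tree T" and "locally_finite T" and "infinite T" and "periodic T"
  shows "branching_number T > 1 \<or>
    (\<exists>d::nat. d \<ge> 1 \<and> (\<exists>c C. 0 < c \<and> 0 < C \<and>
       (\<forall>n::nat. n \<ge> 1 \<longrightarrow> c \<le> real (card (ball T n)) / real n ^ d \<and>
                               real (card (ball T n)) / real n ^ d \<le> C)))"
proof (cases "\<exists>x. has_disjoint_copies T x")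
  case True
  then show ?thesis using disjoint_copies_branching_number[OF assms(1)] by blast
next
  case False
  obtain N where N: "periodicN T N" using assms(4) by (auto simp: periodic_def)
  have "[] \<in> T" using assms(1) by (simp add: rooted_tree_def)
  then obtain d where "poly_growth (subtree_growth T []) d"
    using poly_growth_subtrees[OF assms(1,2) N] False by blast
  moreover have "subtree_growth T [] = (\<lambda>n. real (card (ball T n)))"
    by (simp add: fun_eq_iff subtree_growth_def subtree_ball_root)
  ultimately have d: "poly_growth (\<lambda>n. real (card (ball T n))) d" by simp
  moreover have "d \<ge> 1"
    using card_ball_ge[OF assms(1-3)] by (intro poly_growth_degree_pos[OF d]) blast
  ultimately show ?thesis using poly_growth_ratio_bounds by blast
qed

end
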